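(* Let $\ell\ge1$ be an integer and $p$ an integer with $-1\le p\le \ell-1$. Then, as an identity of meromorphic functions of $x$, $$\Delta^\ell\left[\binom{x+p}{\ell}\psi(x)\right] = H_\ell+\psi(x+p+1),$$ where $\Delta g(x)=g(x+1)-g(x)$ is the forward difference operator.
   Context: $\psi=\Gamma'/\Gamma$ is the digamma function, $H_\ell=1+\frac12+\cdots+\frac1\ell$ the harmonic number, and $\binom{x}{n}=\frac{x(x-1)\cdots(x-n+1)}{n!}$ the generalized binomial coefficient. *)

theory Defs
  imports "HOL-Analysis.Analysis"
begin

definition fwd_diff :: "(complex \<Rightarrow> complex) \<Rightarrow> complex \<Rightarrow> complex" where
  "fwd_diff g = (\<lambda>x. g (x + 1) - g x)"

end

theory Submission
  imports Defs
begin

text \<open>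
  Write \<open>F\<^sub>l\<^sub>,\<^sub>p(z) = (z+p gchoose l) \<psi>(z)\<close>. Pascal's rule together with
  \<open>\<psi>(z+1) = \<psi>(z) + 1/z\<close> gives \<open>\<Delta>F\<^sub>l\<^sub>+\<^sub>1\<^sub>,\<^sub>p = F\<^sub>l\<^sub>,\<^sub>p + (z+p+1 gchoose l+1)/z\<close>, and
  \<open>\<Delta>\<^sup>l\<close> maps \<open>(z+a gchoose l+1)/z\<close> to the constant \<open>1/(l+1)\<close> for every \<open>0 \<le> a \<le> l\<close>
  (Pascal's rule reduces \<open>a\<close> to \<open>0\<close>, where \<open>(z gchoose l+1)/z = (z-1 gchoose l)/(l+1)\<close>).
  Hence the identity for \<open>(l, p)\<close> yields the one for \<open>(l+1, p)\<close> whenever \<open>p < l\<close>.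
  In the extremal case \<open>p = l\<close>, writing \<open>\<psi>(z) = \<psi>(z+1) - 1/z\<close> turns \<open>F\<^sub>l\<^sub>+\<^sub>1\<^sub>,\<^sub>l\<close> into
  \<open>F\<^sub>l\<^sub>+\<^sub>1\<^sub>,\<^sub>l\<^sub>-\<^sub>1(z+1)\<close> minus \<open>(z+l gchoose l+1)/z\<close>, which is annihilated by \<open>\<Delta>\<^sup>l\<^sup>+\<^sup>1\<close>.
\<close>

lemma fwd_diff_iterate_Suc_apply:
  "(fwd_diff ^^ Suc n) f x = (fwd_diff ^^ n) f (x + 1) - (fwd_diff ^^ n) f x"
  by (simp add: fwd_diff_def)

lemma fwd_diff_iterate_cong:
  assumes "\<And>k. k \<le> n \<Longrightarrow> f (x + of_nat k) = g (x + of_nat k)"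
  shows "(fwd_diff ^^ n) f x = (fwd_diff ^^ n) g x"
  using assms
proof (induction n arbitrary: x)
  case 0
  then show ?case using 0[of 0] by simp
next
  case (Suc n)
  have "(fwd_diff ^^ n) f x = (fwd_diff ^^ n) g x"
    using Suc.prems by (intro Suc.IH) auto
  moreover have "(fwd_diff ^^ n) f (x + 1) = (fwd_diff ^^ n) g (x + 1)"
    using Suc.prems[of "Suc _"] by (intro Suc.IH) (simp add: add_ac)
  ultimately show ?case
    by (simp only: fwd_diff_iterate_Suc_apply)
qed

lemma fwd_diff_iterate_add:
  "(fwd_diff ^^ n) (\<lambda>y. f y + g y) = (\<lambda>y. (fwd_diff ^^ n) f y + (fwd_diff ^^ n) g y)"
  by (induction n) (simp_all add: fwd_diff_def algebra_simps)

lemma fwd_diff_iterate_diff: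
  "(fwd_diff ^^ n) (\<lambda>y. f y - g y) = (\<lambda>y. (fwd_diff ^^ n) f y - (fwd_diff ^^ n) g y)"
  by (induction n) (simp_all add: fwd_diff_def algebra_simps)

lemma fwd_diff_iterate_cmult:
  "(fwd_diff ^^ n) (\<lambda>y. c * f y) = (\<lambda>y. c * (fwd_diff ^^ n) f y)"
  by (induction n) (simp_all add: fwd_diff_def algebra_simps)

lemma fwd_diff_iterate_shift:
  "(fwd_diff ^^ n) (\<lambda>y. f (y + 1)) = (\<lambda>y. (fwd_diff ^^ n) f (y + 1))"
  by (induction n) (simp_all add: fwd_diff_def)

lemma fwd_diff_gbinomial:
  "fwd_diff (\<lambda>y. (y + b) gchoose Suc k) = (\<lambda>y. (y + b) gchoose k)"
  using gbinomial_Suc_Suc[of "_ + b" k] by (simp add: fwd_diff_def add_ac)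

lemma fwd_diff_iterate_gbinomial:
  "(fwd_diff ^^ n) (\<lambda>y. (y + b) gchoose k) =
     (\<lambda>y. if n \<le> k then (y + b) gchoose (k - n) else 0)"
proof (induction n)
  case (Suc n)
  show ?case
  proof (cases "Suc n \<le> k")
    case True
    then have "k - n = Suc (k - Suc n)" by simp
    with True show ?thesis
      by (simp add: Suc.IH fwd_diff_gbinomial del: gbinomial_Suc_Suc)
  next
    case False
    then show ?thesis
      by (simp only: funpow.simps o_apply Suc.IH) (auto simp: fwd_diff_def)
  qed
qed simp

lemma fwd_diff_iterate_gbinomial_div:
  fixes a j m :: nat and x :: complex
  assumes "a < j" "j - 1 \<le> m" "\<And>k. k \<le> m \<Longrightarrow> x + of_nat k \<noteq> 0"
  shows "(fwd_diff ^^ m) (\<lambda>y. ((y + of_nat a) gchoose j) / y) x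
           = (if m = j - 1 then 1 / of_nat j else 0)"
  using assms
proof (induction a arbitrary: j)
  case 0
  have "(fwd_diff ^^ m) (\<lambda>y. ((y + of_nat 0) gchoose j) / y) x
      = (fwd_diff ^^ m) (\<lambda>y. 1 / of_nat j * ((y + (-1)) gchoose (j - 1))) x"
    using 0 by (intro fwd_diff_iterate_cong) (simp add: gbinomial_absorption')
  also have "\<dots> = (if m = j - 1 then 1 / of_nat j else 0)"
    using 0 by (simp only: fwd_diff_iterate_cmult fwd_diff_iterate_gbinomial) simp
  finally show ?case .
next
  case (Suc a)
  then obtain i where j: "j = Suc i" by (cases j) auto
  have "(fwd_diff ^^ m) (\<lambda>y. ((y + of_nat (Suc a)) gchoose j) / y) x
      = (fwd_diff ^^ m) (\<lambda>y. ((y + of_nat a) gchoose j) / y + ((y + of_nat a) gchoose i) / y) x"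
  proof (rule fwd_diff_iterate_cong)
    fix k
    show "((x + of_nat k + of_nat (Suc a)) gchoose j) / (x + of_nat k)
        = ((x + of_nat k + of_nat a) gchoose j) / (x + of_nat k)
          + ((x + of_nat k + of_nat a) gchoose i) / (x + of_nat k)"
      using gbinomial_Suc_Suc[of "x + of_nat k + of_nat a" i]
      by (simp add: j add_ac add_divide_distrib)
  qed
  also have "\<dots> = (fwd_diff ^^ m) (\<lambda>y. ((y + of_nat a) gchoose j) / y) x
                 + (fwd_diff ^^ m) (\<lambda>y. ((y + of_nat a) gchoose i) / y) x"
    by (simp add: fwd_diff_iterate_add)
  also have "(fwd_diff ^^ m) (\<lambda>y. ((y + of_nat a) gchoose j) / y) x
      = (if m = j - 1 then 1 / of_nat j else 0)"
    using Suc by (intro Suc.IH) auto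
  also have "(fwd_diff ^^ m) (\<lambda>y. ((y + of_nat a) gchoose i) / y) x = 0"
    using Suc.IH[of i] Suc.prems j by auto
  finally show ?case by simp
qed

lemma fwd_diff_gbinomial_Digamma:
  fixes z c :: complex
  assumes "z \<noteq> 0"
  shows "fwd_diff (\<lambda>z. ((z + c) gchoose Suc n) * Digamma z) z
           = ((z + c) gchoose n) * Digamma z + ((z + (c + 1)) gchoose Suc n) / z"
  using gbinomial_Suc_Suc[of "z + c" n] Digamma_plus1[OF assms] assms
  by (simp add: fwd_diff_def algebra_simps add_divide_distrib)

lemma fwd_diff_iterate_Suc_gbinomial_Digamma:
  fixes x c :: complex
  assumes "\<And>k. k \<le> n \<Longrightarrow> x + of_nat k \<noteq> 0"
  shows "(fwd_diff ^^ Suc n) (\<lambda>z. ((z + c) gchoose Suc n) * Digamma z) x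
           = (fwd_diff ^^ n) (\<lambda>z. ((z + c) gchoose n) * Digamma z) x
             + (fwd_diff ^^ n) (\<lambda>z. ((z + (c + 1)) gchoose Suc n) / z) x"
proof -
  have "(fwd_diff ^^ Suc n) (\<lambda>z. ((z + c) gchoose Suc n) * Digamma z) x
      = (fwd_diff ^^ n) (\<lambda>z. ((z + c) gchoose n) * Digamma z
                            + ((z + (c + 1)) gchoose Suc n) / z) x"
    unfolding funpow_Suc_right o_apply using assms
    by (intro fwd_diff_iterate_cong) (simp add: fwd_diff_gbinomial_Digamma)
  then show ?thesis by (simp add: fwd_diff_iterate_add)
qed

lemma fwd_diff_iterate_Digamma_shift:
  fixes x :: complex
  assumes "\<And>k. k \<le> m \<Longrightarrow> x + of_nat k \<noteq> 0"
  shows "(fwd_diff ^^ m) (\<lambda>z. f z * Digamma z) x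
           = (fwd_diff ^^ m) (\<lambda>z. f (z - 1) * Digamma z) (x + 1)
             - (fwd_diff ^^ m) (\<lambda>z. f z / z) x"
proof -
  have "(fwd_diff ^^ m) (\<lambda>z. f z * Digamma z) x
      = (fwd_diff ^^ m) (\<lambda>z. f (z + 1 - 1) * Digamma (z + 1) - f z / z) x"
    using assms by (intro fwd_diff_iterate_cong) (simp add: Digamma_plus1 distrib_left)
  then show ?thesis
    by (simp only: fwd_diff_iterate_diff fwd_diff_iterate_shift[of m "\<lambda>z. f (z - 1) * Digamma z"])
qed

lemma fwd_diff_iterate_gbinomial_Digamma:
  fixes l :: nat and p :: int and x :: complex
  assumes "-1 \<le> p" "p \<le> int l - 1" "\<And>k. k \<le> l \<Longrightarrow> x + of_nat k \<noteq> 0"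
  shows "(fwd_diff ^^ l) (\<lambda>z. ((z + of_int p) gchoose l) * Digamma z) x
           = harm l + Digamma (x + of_int p + 1)"
  using assms
proof (induction l arbitrary: p x)
  case 0
  then show ?case by (simp add: harm_def)
next
  case (Suc n)
  have below_diagonal:
    "(fwd_diff ^^ Suc n) (\<lambda>z. ((z + of_int p) gchoose Suc n) * Digamma z) x
       = harm (Suc n) + Digamma (x + of_int p + 1)"
    if p: "-1 \<le> p" "p \<le> int n - 1" and x: "\<And>k. k \<le> n \<Longrightarrow> x + of_nat k \<noteq> 0" for p x
  proof -
    have "of_int p + 1 = (of_nat (nat (p + 1)) :: complex)"
      using p by simp
    then have div: "(fwd_diff ^^ n) (\<lambda>z. ((z + (of_int p + 1)) gchoose Suc n) / z) x
                      = 1 / of_nat (Suc n)"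
      using fwd_diff_iterate_gbinomial_div[of "nat (p + 1)" "Suc n" n x] p x by simp
    have "(fwd_diff ^^ Suc n) (\<lambda>z. ((z + of_int p) gchoose Suc n) * Digamma z) x
        = (fwd_diff ^^ n) (\<lambda>z. ((z + of_int p) gchoose n) * Digamma z) x
          + (fwd_diff ^^ n) (\<lambda>z. ((z + (of_int p + 1)) gchoose Suc n) / z) x"
      by (rule fwd_diff_iterate_Suc_gbinomial_Digamma[OF x])
    also have "\<dots> = harm n + Digamma (x + of_int p + 1) + 1 / of_nat (Suc n)"
      by (simp only: Suc.IH[OF p x] div)
    finally show ?thesis by (simp add: harm_Suc inverse_eq_divide)
  qed
  show ?case
  proof (cases "p \<le> int n - 1")
    case True
    then show ?thesis using Suc.prems by (intro below_diagonal) simp_all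
  next
    case False
    with Suc.prems have p: "p = int n" by simp
    have "(fwd_diff ^^ Suc n) (\<lambda>z. ((z + of_int p) gchoose Suc n) * Digamma z) x
        = (fwd_diff ^^ Suc n) (\<lambda>z. ((z + of_int (int n - 1)) gchoose Suc n) * Digamma z) (x + 1)
          - (fwd_diff ^^ Suc n) (\<lambda>z. ((z + of_nat n) gchoose Suc n) / z) x"
      using fwd_diff_iterate_Digamma_shift[of "Suc n" x "\<lambda>z. (z + of_int p) gchoose Suc n"] Suc.prems(3)
      by (simp add: p algebra_simps)
    also have "\<dots> = harm (Suc n) + Digamma (x + of_int p + 1)"
      using below_diagonal[of "int n - 1" "x + 1"] Suc.prems(3)[of "Suc _"]
        fwd_diff_iterate_gbinomial_div[of n "Suc n" "Suc n" x] Suc.prems(3)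
      by (simp add: p add_ac)
    finally show ?thesis .
  qed
qed

theorem lemma3p1:
  fixes l :: nat and p :: int and x :: complex
  assumes "l \<ge> 1" and "-1 \<le> p" and "p \<le> int l - 1"
    and "\<And>k. k \<le> l \<Longrightarrow> x + of_nat k \<notin> \<int>\<^sub>\<le>\<^sub>0"
  shows "(fwd_diff ^^ l) (\<lambda>z. ((z + of_int p) gchoose l) * Digamma z) x
           = harm l + Digamma (x + of_int p + 1)"
proof (rule fwd_diff_iterate_gbinomial_Digamma)
  show "-1 \<le> p" "p \<le> int l - 1" by (fact assms(2,3))+
  show "x + of_nat k \<noteq> 0" if "k \<le> l" for k
    using assms(4)[OF that] by auto
qed

end
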